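(* Let $d,N\in\mathbb{N}$ and $k=2$. Every $\mathbf{x}=(\mathbf{x}_1,\dots,\mathbf{x}_N)\in\mathcal{G}_{d,2}^N$ satisfies $$\mathsf{bary}(\mathbf{x})=1\oplus\Big(\frac1N\sum_{i=1}^N\mathbf{x}_i^{(1)}\Big)\oplus\Big(\frac1N\sum_{i=1}^N\mathbf{x}_i^{(2)}-\frac1{2N}\sum_{i=1}^N\mathbf{x}_i^{(1)}\otimes\mathbf{x}_i^{(1)}+\frac1{2N^2}\sum_{i_1=1}^N\sum_{i_2=1}^N\mathbf{x}_{i_1}^{(1)}\otimes\mathbf{x}_{i_2}^{(1)}\Big).$$
   Context: $T_{d,2}=\mathbb{R}\oplus\mathbb{R}^d\oplus\mathbb{R}^{d\times d}$ with elements $\mathbf{z}=\mathbf{z}^{(0)}\oplus\mathbf{z}^{(1)}\oplus\mathbf{z}^{(2)}$ and product given bilinearly by the tensor (outer) product of levels, truncated (products landing in level $>2$ are $0$); $\mathbf{a}\otimes\mathbf{b}$ for vectors is the matrix $(a_ib_j)$. $\mathfrak{g}_{d,2}$ is the smallest Lie subalgebra (commutator bracket) of $T_{d,2}$ containing $e_1,\dots,e_d\in\mathbb{R}^d$; $\exp(\mathbf{z})=\sum_{\ell=0}^2\mathbf{z}^{\otimes\ell}/\ell!$; $\mathcal{G}_{d,2}=\exp(\mathfrak{g}_{d,2})$, a group with $\log=\exp^{-1}$, $\log(\mathbf{s})=\sum_{\ell\ge1}\frac{(-1)^{\ell+1}}{\ell}(\mathbf{s}-1)^{\otimes\ell}$.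 For $\mathbf{x}\in\mathcal{G}_{d,2}^N$, $\mathsf{bary}(\mathbf{x})$ is the unique $\mathbf{m}\in\mathcal{G}_{d,2}$ with $\sum_{i=1}^N\log(\mathbf{m}^{-1}\mathbf{x}_i)=0$. *)

theory Defs
  imports "HOL-Analysis.Analysis"
begin

text \<open>Truncated tensor algebra T_{d,2} = R + R^d + R^(d x d), represented as a triple;
  the vector-space structure (+, scaleR, 0) is the product structure from the library.\<close>

type_synonym ('d) tens2 = "real \<times> (real ^ 'd) \<times> (real ^ 'd ^ 'd)"

definition outer :: "real ^ ('d::finite) \<Rightarrow> real ^ 'd \<Rightarrow> real ^ 'd ^ 'd" where
  "outer a b = (\<chi> i j. a $ i * b $ j)"

definition lvl0 :: "('d::finite) tens2 \<Rightarrow> real" where "lvl0 z = fst z"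
definition lvl1 :: "('d::finite) tens2 \<Rightarrow> real ^ 'd" where "lvl1 z = fst (snd z)"
definition lvl2 :: "('d::finite) tens2 \<Rightarrow> real ^ 'd ^ 'd" where "lvl2 z = snd (snd z)"

definition tmk :: "real \<Rightarrow> real ^ ('d::finite) \<Rightarrow> real ^ 'd ^ 'd \<Rightarrow> 'd tens2" where
  "tmk a b c = (a, b, c)"

definition tmul :: "('d::finite) tens2 \<Rightarrow> 'd tens2 \<Rightarrow> 'd tens2" where
  "tmul a b = tmk (lvl0 a * lvl0 b)
                  (lvl0 a *\<^sub>R lvl1 b + lvl0 b *\<^sub>R lvl1 a)
                  (lvl0 a *\<^sub>R lvl2 b + lvl0 b *\<^sub>R lvl2 a + outer (lvl1 a) (lvl1 b))"

definition tone :: "('d::finite) tens2" where "tone = tmk 1 0 0"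

definition tbracket :: "('d::finite) tens2 \<Rightarrow> 'd tens2 \<Rightarrow> 'd tens2" where
  "tbracket a b = tmul a b - tmul b a"

definition tbasis :: "('d::finite) \<Rightarrow> 'd tens2" where
  "tbasis i = tmk 0 (axis i 1) 0"

inductive_set liealg :: "('d::finite) tens2 set" where
  gen: "tbasis i \<in> liealg"
| zero: "0 \<in> liealg"
| add: "a \<in> liealg \<Longrightarrow> b \<in> liealg \<Longrightarrow> a + b \<in> liealg"
| scale: "a \<in> liealg \<Longrightarrow> c *\<^sub>R a \<in> liealg"
| bracket: "a \<in> liealg \<Longrightarrow> b \<in> liealg \<Longrightarrow> tbracket a b \<in> liealg"

definition texp :: "('d::finite) tens2 \<Rightarrow> 'd tens2" where
  "texp z = tone + z + (1/2) *\<^sub>R tmul z z"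

text \<open>log(s) = sum_{l>=1} (-1)^(l+1)/l (s-1)^l; on elements with level-0 component 1
  (in particular on G_{d,2}) the terms with l >= 3 vanish, so the series is the finite sum below.\<close>
definition tlog :: "('d::finite) tens2 \<Rightarrow> 'd tens2" where
  "tlog s = (s - tone) - (1/2) *\<^sub>R tmul (s - tone) (s - tone)"

text \<open>Multiplicative inverse in T_{d,2} (for level-0 component nonzero).\<close>
definition tinv :: "('d::finite) tens2 \<Rightarrow> 'd tens2" where
  "tinv a = tmk (1 / lvl0 a)
                (- (1 / (lvl0 a)^2) *\<^sub>R lvl1 a)
                (- (1 / (lvl0 a)^2) *\<^sub>R lvl2 a + (1 / (lvl0 a)^3) *\<^sub>R outer (lvl1 a) (lvl1 a))"

definition tgroup :: "('d::finite) tens2 set" where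
  "tgroup = texp ` liealg"

definition bary :: "nat \<Rightarrow> (nat \<Rightarrow> ('d::finite) tens2) \<Rightarrow> 'd tens2" where
  "bary N x = (THE m. m \<in> tgroup \<and> (\<Sum>i=1..N. tlog (tmul (tinv m) (x i))) = 0)"

end

theory Submission imports Defs begin

(* The Lie algebra g_{d,2} is exactly the set of elements v + A with A skew-symmetric (it contains
   every e_i and every e_i e_j - e_j e_i, and these span), so G_{d,2} consists of the elements
   1 + v + A with A + A^T = v v^T.  For m = 1 + a + A and x_i = 1 + b_i + B_i one computes
   log(m^{-1} x_i) = (b_i - a) + (B_i - A + (a a^T - a b_i^T + b_i a^T - b_i b_i^T)/2).
   Summing over i, the level-1 part vanishes iff a is the mean of the b_i; then the cross terms
   cancel, and the level-2 part is N times (closed form - A).  The closed form lies in G_{d,2}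
   because the symmetric parts of the B_i are the b_i b_i^T / 2. *)

lemma tens2_eq_iff:
  "z = w \<longleftrightarrow> lvl0 z = lvl0 w \<and> lvl1 z = lvl1 w \<and> lvl2 z = lvl2 w"
  by (cases z; cases w) (auto simp: lvl0_def lvl1_def lvl2_def)

lemma lvl_tmk [simp]: "lvl0 (tmk a b c) = a" "lvl1 (tmk a b c) = b" "lvl2 (tmk a b c) = c"
  by (simp_all add: lvl0_def lvl1_def lvl2_def tmk_def)

lemma lvl_zero [simp]: "lvl0 0 = 0" "lvl1 0 = 0" "lvl2 0 = 0"
  by (simp_all add: lvl0_def lvl1_def lvl2_def)

lemma lvl_add [simp]:
  "lvl0 (z + w) = lvl0 z + lvl0 w" "lvl1 (z + w) = lvl1 z + lvl1 w" "lvl2 (z + w) = lvl2 z + lvl2 w"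
  by (simp_all add: lvl0_def lvl1_def lvl2_def)

lemma lvl_diff [simp]:
  "lvl0 (z - w) = lvl0 z - lvl0 w" "lvl1 (z - w) = lvl1 z - lvl1 w" "lvl2 (z - w) = lvl2 z - lvl2 w"
  by (simp_all add: lvl0_def lvl1_def lvl2_def)

lemma lvl_scaleR [simp]:
  "lvl0 (r *\<^sub>R z) = r * lvl0 z" "lvl1 (r *\<^sub>R z) = r *\<^sub>R lvl1 z" "lvl2 (r *\<^sub>R z) = r *\<^sub>R lvl2 z"
  by (simp_all add: lvl0_def lvl1_def lvl2_def)

lemma lvl_sum [simp]:
  "lvl0 (sum f S) = (\<Sum>s\<in>S. lvl0 (f s))"
  "lvl1 (sum f S) = (\<Sum>s\<in>S. lvl1 (f s))"
  "lvl2 (sum f S) = (\<Sum>s\<in>S. lvl2 (f s))"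
  by (induction S rule: infinite_finite_induct; simp)+

lemma lvl_tone [simp]: "lvl0 tone = 1" "lvl1 tone = 0" "lvl2 tone = 0"
  by (simp_all add: tone_def)

lemma lvl_tmul [simp]:
  "lvl0 (tmul a b) = lvl0 a * lvl0 b"
  "lvl1 (tmul a b) = lvl0 a *\<^sub>R lvl1 b + lvl0 b *\<^sub>R lvl1 a"
  "lvl2 (tmul a b) = lvl0 a *\<^sub>R lvl2 b + lvl0 b *\<^sub>R lvl2 a + outer (lvl1 a) (lvl1 b)"
  by (simp_all add: tmul_def)

lemma outer_component [simp]: "outer a b $ i $ j = a $ i * b $ j"
  by (simp add: outer_def)

interpretation outer: bounded_bilinear outer
  unfolding bilinear_conv_bounded_bilinear[symmetric] bilinear_def
  by (auto simp: linear_iff vec_eq_iff algebra_simps)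

lemma linear_transpose: "linear (transpose :: real^'n^'m \<Rightarrow> real^'m^'n)"
  by (auto simp: linear_iff transpose_def vec_eq_iff)

lemmas transpose_linear_simps =
  linear_0[OF linear_transpose] linear_add[OF linear_transpose] linear_diff[OF linear_transpose]
  linear_scale[OF linear_transpose] linear_sum[OF linear_transpose]

lemma transpose_outer: "transpose (outer a b) = outer b a"
  by (simp add: transpose_def vec_eq_iff mult.commute)

lemma subspace_liealg: "subspace liealg"
  by (simp add: subspace_def liealg.intros)

lemma outer_axis_expansion:
  "A = (\<Sum>i\<in>UNIV. \<Sum>j\<in>UNIV. A $ i $ j *\<^sub>R outer (axis i 1) (axis j 1))"
  by (simp add: vec_eq_iff sum_component axis_def if_distrib[of "\<lambda>x. _ * x"] sum.delta cong: if_cong)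

lemma tmk_level1_in_liealg: "tmk 0 v 0 \<in> liealg"
proof -
  have "tmk 0 v 0 = (\<Sum>i\<in>UNIV. v $ i *\<^sub>R tbasis i)"
    using basis_expansion[of v] by (simp add: tens2_eq_iff tbasis_def scalar_mult_eq_scaleR)
  then show ?thesis
    by (simp add: subspace_sum subspace_scale subspace_liealg liealg.gen)
qed

lemma tmk_level2_in_liealg:
  assumes "transpose A = - A"
  shows "tmk 0 0 A \<in> liealg"
proof -
  let ?E = "\<lambda>i j. outer (axis i 1) (axis j 1) :: real^'a^'a"
  have "transpose A = (\<Sum>i\<in>UNIV. \<Sum>j\<in>UNIV. A $ i $ j *\<^sub>R ?E j i)"
    by (subst outer_axis_expansion) (simp add: transpose_linear_simps transpose_outer)
  then have "(\<Sum>i\<in>UNIV. \<Sum>j\<in>UNIV. (A $ i $ j / 2) *\<^sub>R (?E i j - ?E j i))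
      = (1/2) *\<^sub>R A - (1/2) *\<^sub>R transpose A"
    by (subst (2) outer_axis_expansion)
       (simp add: scaleR_diff_right sum_subtractf scaleR_sum_right)
  also have "\<dots> = A"
    using assms by (simp add: scaleR_left_distrib[symmetric])
  finally have expansion: "(\<Sum>i\<in>UNIV. \<Sum>j\<in>UNIV. (A $ i $ j / 2) *\<^sub>R (?E i j - ?E j i)) = A" .
  have "tbracket (tbasis i) (tbasis j) = tmk 0 0 (?E i j - ?E j i)" for i j
    by (simp add: tens2_eq_iff tbracket_def tbasis_def)
  with expansion have "tmk 0 0 A = (\<Sum>i\<in>UNIV. \<Sum>j\<in>UNIV. (A $ i $ j / 2) *\<^sub>R tbracket (tbasis i) (tbasis j))"
    by (simp add: tens2_eq_iff)
  then show ?thesis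
    by (simp add: subspace_sum subspace_scale subspace_liealg liealg.gen liealg.bracket)
qed

lemma liealg_iff: "z \<in> liealg \<longleftrightarrow> lvl0 z = 0 \<and> transpose (lvl2 z) = - lvl2 z"
proof
  assume "lvl0 z = 0 \<and> transpose (lvl2 z) = - lvl2 z"
  then have "z = tmk 0 (lvl1 z) 0 + tmk 0 0 (lvl2 z)" "tmk 0 0 (lvl2 z) \<in> liealg"
    by (simp_all add: tens2_eq_iff tmk_level2_in_liealg)
  then show "z \<in> liealg"
    by (metis liealg.add tmk_level1_in_liealg)
next
  show "z \<in> liealg \<Longrightarrow> lvl0 z = 0 \<and> transpose (lvl2 z) = - lvl2 z"
  proof (induction rule: liealg.induct)
    case (bracket a b)
    then show ?case
      by (simp add: tbracket_def transpose_linear_simps transpose_outer)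
  qed (simp_all add: tbasis_def transpose_linear_simps)
qed

lemma tgroup_iff:
  "z \<in> tgroup \<longleftrightarrow> lvl0 z = 1 \<and> lvl2 z + transpose (lvl2 z) = outer (lvl1 z) (lvl1 z)"
proof
  assume "z \<in> tgroup"
  then obtain w where "z = texp w" "lvl0 w = 0" "transpose (lvl2 w) = - lvl2 w"
    by (auto simp: tgroup_def liealg_iff)
  then show "lvl0 z = 1 \<and> lvl2 z + transpose (lvl2 z) = outer (lvl1 z) (lvl1 z)"
    by (simp add: texp_def transpose_linear_simps
        transpose_outer scaleR_left_distrib[symmetric])
next
  assume z: "lvl0 z = 1 \<and> lvl2 z + transpose (lvl2 z) = outer (lvl1 z) (lvl1 z)"
  define w where "w = tmk 0 (lvl1 z) (lvl2 z - (1/2) *\<^sub>R outer (lvl1 z) (lvl1 z))"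
  have "transpose (lvl2 w) = - lvl2 w"
    using z by (simp add: w_def transpose_linear_simps
        transpose_outer eq_diff_eq' algebra_simps)
  then have "w \<in> liealg"
    by (simp add: liealg_iff w_def)
  moreover have "z = texp w"
    using z by (simp add: tens2_eq_iff texp_def w_def)
  ultimately show "z \<in> tgroup"
    by (auto simp: tgroup_def)
qed

lemma tlog_tinv_tmul:
  assumes "lvl0 m = 1" "lvl0 y = 1"
  shows "tlog (tmul (tinv m) y) = tmk 0 (lvl1 y - lvl1 m)
    (lvl2 y - lvl2 m + (1/2) *\<^sub>R (outer (lvl1 m) (lvl1 m) - outer (lvl1 m) (lvl1 y)
       + outer (lvl1 y) (lvl1 m) - outer (lvl1 y) (lvl1 y)))"
  using assms by (simp add: tens2_eq_iff tlog_def tinv_def vec_eq_iff algebra_simps)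

lemma sum_tlog_tinv_tmul:
  assumes "lvl0 m = 1" "\<forall>i\<in>S. lvl0 (x i) = 1"
  defines "s \<equiv> \<Sum>i\<in>S. lvl1 (x i)" and "n \<equiv> real (card S)"
  shows "(\<Sum>i\<in>S. tlog (tmul (tinv m) (x i))) = tmk 0 (s - n *\<^sub>R lvl1 m)
    ((\<Sum>i\<in>S. lvl2 (x i)) - n *\<^sub>R lvl2 m + (1/2) *\<^sub>R (n *\<^sub>R outer (lvl1 m) (lvl1 m)
       - outer (lvl1 m) s + outer s (lvl1 m) - (\<Sum>i\<in>S. outer (lvl1 (x i)) (lvl1 (x i)))))"
  using assms
  by (simp add: tlog_tinv_tmul tens2_eq_iff sum_subtractf sum.distrib scaleR_sum_right[symmetric]
      outer.sum_left outer.sum_right sum_constant_scaleR del: sum_constant)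

definition lvl1_mean :: "'i set \<Rightarrow> ('i \<Rightarrow> ('d::finite) tens2) \<Rightarrow> real ^ 'd" where
  "lvl1_mean S x = (1 / real (card S)) *\<^sub>R (\<Sum>i\<in>S. lvl1 (x i))"

definition bary_closed_form :: "'i set \<Rightarrow> ('i \<Rightarrow> ('d::finite) tens2) \<Rightarrow> 'd tens2" where
  "bary_closed_form S x = tmk 1 (lvl1_mean S x)
     ((1 / real (card S)) *\<^sub>R (\<Sum>i\<in>S. lvl2 (x i))
      - (1 / (2 * real (card S))) *\<^sub>R (\<Sum>i\<in>S. outer (lvl1 (x i)) (lvl1 (x i)))
      + (1/2) *\<^sub>R outer (lvl1_mean S x) (lvl1_mean S x))"

lemma sum_tlog_eq_0_iff:
  assumes "finite S" "S \<noteq> {}" "lvl0 m = 1" "\<forall>i\<in>S. lvl0 (x i) = 1"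
  shows "(\<Sum>i\<in>S. tlog (tmul (tinv m) (x i))) = 0 \<longleftrightarrow> m = bary_closed_form S x"
proof -
  define n where "n = real (card S)"
  define a where "a = lvl1_mean S x"
  define T where "T = (\<Sum>i\<in>S. tlog (tmul (tinv m) (x i)))"
  have "n > 0"
    using assms(1,2) by (simp add: n_def card_gt_0_iff)
  have s: "(\<Sum>i\<in>S. lvl1 (x i)) = n *\<^sub>R a"
    using \<open>n > 0\<close> by (simp add: a_def lvl1_mean_def n_def)
  have T: "T = tmk 0 (n *\<^sub>R (a - lvl1 m))
    ((\<Sum>i\<in>S. lvl2 (x i)) - n *\<^sub>R lvl2 m + (1/2) *\<^sub>R (n *\<^sub>R outer (lvl1 m) (lvl1 m)
       - outer (lvl1 m) (n *\<^sub>R a) + outer (n *\<^sub>R a) (lvl1 m) - (\<Sum>i\<in>S. outer (lvl1 (x i)) (lvl1 (x i)))))"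
    using assms(3,4) by (simp add: T_def sum_tlog_tinv_tmul s n_def scaleR_diff_right)
  have lvl1_T: "lvl1 T = 0 \<longleftrightarrow> lvl1 m = a"
    using \<open>n > 0\<close> by (auto simp: T)
  have lvl2_T: "lvl2 T = n *\<^sub>R (lvl2 (bary_closed_form S x) - lvl2 m)" if "lvl1 m = a"
    using \<open>n > 0\<close> that
    by (simp add: T bary_closed_form_def a_def n_def outer.scaleR_left outer.scaleR_right algebra_simps)
  have "T = 0 \<longleftrightarrow> lvl1 T = 0 \<and> lvl2 T = 0"
    by (simp add: tens2_eq_iff T)
  also have "\<dots> \<longleftrightarrow> lvl1 m = a \<and> lvl2 m = lvl2 (bary_closed_form S x)"
    using lvl1_T lvl2_T \<open>n > 0\<close> by auto
  also have "\<dots> \<longleftrightarrow> m = bary_closed_form S x"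
    using assms(3) by (auto simp: tens2_eq_iff bary_closed_form_def a_def)
  finally show ?thesis
    unfolding T_def .
qed

lemma bary_closed_form_in_tgroup:
  assumes "\<forall>i\<in>S. x i \<in> tgroup"
  shows "bary_closed_form S x \<in> tgroup"
proof -
  define B where "B = (\<Sum>i\<in>S. lvl2 (x i))"
  define Q where "Q = (\<Sum>i\<in>S. outer (lvl1 (x i)) (lvl1 (x i)))"
  define r where "r = 1 / real (card S)"
  define a where "a = lvl1_mean S x"
  have "B + transpose B = Q"
    using assms by (simp add: B_def Q_def transpose_linear_simps tgroup_iff flip: sum.distrib)
  then have B: "r * B $ i $ j + r * B $ j $ i = r * Q $ i $ j" for i j
    by (simp add: vec_eq_iff transpose_def flip: distrib_left)
  have Q: "Q $ j $ i = Q $ i $ j" for i j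
    by (simp add: Q_def sum_component mult.commute)
  have c: "lvl2 (bary_closed_form S x) $ i $ j = r * B $ i $ j - r / 2 * Q $ i $ j + a $ i * a $ j / 2" for i j
    by (simp add: bary_closed_form_def B_def Q_def r_def a_def)
  have "lvl2 (bary_closed_form S x) $ i $ j + lvl2 (bary_closed_form S x) $ j $ i = a $ i * a $ j" for i j
    unfolding c using B[of i j] Q[of i j] by (simp add: field_simps)
  then show ?thesis
    by (simp add: tgroup_iff vec_eq_iff transpose_def bary_closed_form_def a_def)
qed

lemma barycenter_equation_iff:
  assumes "finite S" "S \<noteq> {}" "\<forall>i\<in>S. x i \<in> tgroup"
  shows "m \<in> tgroup \<and> (\<Sum>i\<in>S. tlog (tmul (tinv m) (x i))) = 0 \<longleftrightarrow> m = bary_closed_form S x"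
  using sum_tlog_eq_0_iff[OF assms(1,2)] bary_closed_form_in_tgroup[OF assms(3)] assms(3)
  by (metis tgroup_iff)

theorem theorem4p11:
  fixes x :: "nat \<Rightarrow> ('d::finite) tens2" and N :: nat
  assumes "N \<ge> 1"
    and "\<forall>i\<in>{1..N}. x i \<in> tgroup"
  shows "bary N x =
    tmk 1
        ((1 / real N) *\<^sub>R (\<Sum>i=1..N. lvl1 (x i)))
        ((1 / real N) *\<^sub>R (\<Sum>i=1..N. lvl2 (x i))
         - (1 / (2 * real N)) *\<^sub>R (\<Sum>i=1..N. outer (lvl1 (x i)) (lvl1 (x i)))
         + (1 / (2 * (real N)^2)) *\<^sub>R (\<Sum>i1=1..N. \<Sum>i2=1..N. outer (lvl1 (x i1)) (lvl1 (x i2))))"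
proof -
  have "bary N x = bary_closed_form {1..N} x"
    using assms by (simp add: bary_def barycenter_equation_iff)
  moreover have "(\<Sum>i1=1..N. \<Sum>i2=1..N. outer (lvl1 (x i1)) (lvl1 (x i2)))
      = outer (\<Sum>i=1..N. lvl1 (x i)) (\<Sum>i=1..N. lvl1 (x i))"
    by (subst outer.sum_left) (simp add: outer.sum_right)
  ultimately show ?thesis
    by (simp add: bary_closed_form_def lvl1_mean_def outer.scaleR_left outer.scaleR_right power2_eq_square)
qed

end
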